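(* Let $\mu$ and $\pi$ be probability measures on a Polish space $\mathcal Y$ with metric $d$ of diameter $1$, and let $\mathcal D_\mu,\mathcal D_\pi\colon\mathcal Y\to[0,1]$. For $\rho>0$ set $$A_\rho=\{x\in\mathcal Y:\exists y\in\mathcal Y\text{ with }\mathcal D_\pi(y)>\mathcal D_\pi(x)+d(x,y)/\rho\},\qquad\bar A_\rho=\{x:d(x,A_\rho)\le\rho\}.$$ Assume $\delta,\varepsilon_1,\varepsilon_2$ satisfy $$\int\mathcal D_\pi\,d\pi\ge\delta,\quad\|\mu-\pi\|_d\le\varepsilon_1,\quad\sup_x|\mathcal D_\pi(x)-\mathcal D_\mu(x)|\le\varepsilon_2.$$ Define probability measures $\tilde\mu(A)=c_\mu\int_A\mathcal D_\mu\,d\mu$, $\tilde\pi(A)=c_\pi\int_A\mathcal D_\pi\,d\pi$ with normalising constants $c_\mu,c_\pi$. Then for every $\rho\le1$, $$\|\tilde\mu-\tilde\pi\|_d\le\frac1\delta\Bigl(\frac{3\varepsilon_1}\rho+\varepsilon_2+2\pi(\bar A_\rho)\Bigr).$$ In particular $\int\mathcal D_\mu\,d\mu>0$ whenever the right-hand side is strictly smaller than $1$.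
   Context: $\|\cdot\|_d$ denotes the Wasserstein-1 distance with respect to $d$: $\|\mu-\pi\|_d=\sup\{\int fd\mu-\int fd\pi: f\ \text{1-Lipschitz w.r.t. } d\}$. *)

theory Defs
  imports "HOL-Probability.Probability"
begin

text \<open>Wasserstein-1 (Kantorovich-Rubinstein) distance w.r.t. the metric dist of the type:
  supremum over all 1-Lipschitz real functions f of int f dM - int f dN.\<close>
definition W1 :: "'a::metric_space measure \<Rightarrow> 'a measure \<Rightarrow> real" where
  "W1 M N = Sup {(\<integral>x. f x \<partial>M) - (\<integral>x. f x \<partial>N) | f :: 'a \<Rightarrow> real. 1-lipschitz_on UNIV f}"

definition reweight :: "'a measure \<Rightarrow> ('a \<Rightarrow> real) \<Rightarrow> 'a measure" where
  "reweight M D = density M (\<lambda>x. ennreal (D x / (\<integral>y. D y \<partial>M)))"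

definition A_set :: "('a::metric_space \<Rightarrow> real) \<Rightarrow> real \<Rightarrow> 'a set" where
  "A_set D \<rho> = {x. \<exists>y. D y > D x + dist x y / \<rho>}"

text \<open>The closed rho-neighbourhood of A_rho; d(x, empty set) = infinity, so it is empty if A_rho is.\<close>
definition A_bar :: "('a::metric_space \<Rightarrow> real) \<Rightarrow> real \<Rightarrow> 'a set" where
  "A_bar D \<rho> = {x. A_set D \<rho> \<noteq> {} \<and> infdist x (A_set D \<rho>) \<le> \<rho>}"


end

theory Submission
  imports Defs
begin

text \<open>
  Replace \<open>D\<pi>\<close> by its sup-convolution \<open>h x = (SUP y. D\<pi> y - dist x y / \<rho>)\<close>, which is
  \<open>1/\<rho>\<close>-Lipschitz, dominates \<open>D\<pi>\<close> and agrees with it outside \<open>A_set D\<pi> \<rho>\<close>; the excess \<open>h - D\<pi>\<close> is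
  bounded by a \<open>1/\<rho>\<close>-Lipschitz cutoff that equals 1 on \<open>A_set D\<pi> \<rho>\<close> and vanishes outside \<open>A_bar D\<pi> \<rho>\<close>.
  Integrals of such Lipschitz functions move from \<open>\<pi>\<close> to \<open>\<mu>\<close> at cost \<open>\<epsilon>1/\<rho>\<close>, and \<open>D\<mu>\<close> is
  within \<open>\<epsilon>2\<close> of \<open>D\<pi>\<close> pointwise. For a 1-Lipschitz test function \<open>f\<close>, subtracting its
  \<open>D\<mu>\<close>-weighted mean gives \<open>g\<close> with \<open>\<bar>g\<bar> \<le> 1\<close> (diameter 1) and \<open>\<integral> D\<mu> g d\<mu> = 0\<close>, and the
  chain \<open>D\<mu> g \<approx> h g\<close> on \<open>\<mu>\<close>, \<open>h g\<close> from \<open>\<mu>\<close> to \<open>\<pi>\<close>, \<open>h g \<approx> D\<pi> g\<close> on \<open>\<pi>\<close> bounds the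
  numerator of the difference of the reweighted integrals of \<open>f\<close>; its denominator is
  \<open>\<integral> D\<pi> d\<pi> \<ge> \<delta>\<close>. The same chain with \<open>g = 1\<close> bounds \<open>\<integral> D\<mu> d\<mu>\<close> from below.
\<close>

lemma integrable_bounded_borel:
  fixes f :: "'a::topological_space \<Rightarrow> real"
  assumes "finite_measure M" "sets M = sets borel" "f \<in> borel_measurable borel" "\<And>x. \<bar>f x\<bar> \<le> B"
  shows "integrable M f"
proof (rule finite_measure.integrable_const_bound[OF assms(1)])
  show "f \<in> borel_measurable M"
    using assms(3) by (simp add: measurable_cong_sets[OF assms(2) refl])
  show "AE x in M. norm (f x) \<le> B"
    by (intro AE_I2) (simp add: assms(4))
qed

lemma lipschitz_borel_measurable:
  fixes f :: "'a::metric_space \<Rightarrow> 'b::metric_space"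
  assumes "L-lipschitz_on UNIV f"
  shows "f \<in> borel_measurable borel"
  by (rule borel_measurable_continuous_onI[OF lipschitz_on_continuous_on[OF assms]])

lemma lipschitz_on_mult_bounded:
  fixes f g :: "'a::metric_space \<Rightarrow> real"
  assumes "C-lipschitz_on UNIV f" "D-lipschitz_on UNIV g"
    and "\<And>x. \<bar>f x\<bar> \<le> A" "\<And>x. \<bar>g x\<bar> \<le> B"
  shows "(A * D + B * C)-lipschitz_on UNIV (\<lambda>x. f x * g x)"
proof -
  have "0 \<le> A" "0 \<le> B"
    using assms(3,4) abs_ge_zero order_trans by blast+
  show ?thesis
  proof (rule lipschitz_onI)
    fix x y :: 'a
    have "\<bar>f x * g x - f y * g y\<bar> = \<bar>f x * (g x - g y) + (f x - f y) * g y\<bar>"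
      by (simp add: algebra_simps)
    also have "\<dots> \<le> \<bar>f x\<bar> * \<bar>g x - g y\<bar> + \<bar>f x - f y\<bar> * \<bar>g y\<bar>"
      by (metis abs_mult abs_triangle_ineq)
    also have "\<dots> \<le> A * (D * dist x y) + (C * dist x y) * B"
      using lipschitz_onD[OF assms(1), of x y] lipschitz_onD[OF assms(2), of x y] assms(3,4)
        \<open>0 \<le> A\<close> \<open>0 \<le> B\<close>
      by (intro add_mono mult_mono) (simp_all add: dist_real_def)
    finally show "dist (f x * g x) (f y * g y) \<le> (A * D + B * C) * dist x y"
      by (simp add: dist_real_def algebra_simps)
  next
    show "0 \<le> A * D + B * C"
      using \<open>0 \<le> A\<close> \<open>0 \<le> B\<close>
        lipschitz_on_nonneg[OF assms(1)] lipschitz_on_nonneg[OF assms(2)] by simp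
  qed
qed

lemma abs_mult_le_of_abs_le_1:
  fixes u g :: real
  shows "\<bar>g\<bar> \<le> 1 \<Longrightarrow> \<bar>u * g\<bar> \<le> \<bar>u\<bar>"
  by (simp add: abs_mult mult_left_le)

lemma weighted_mean_dist_le:
  fixes D f :: "'a \<Rightarrow> real"
  assumes "integrable M D" "integrable M (\<lambda>y. D y * f y)"
    and "\<And>y. 0 \<le> D y" "0 < (\<integral>y. D y \<partial>M)" "\<And>y. \<bar>f y - a\<bar> \<le> B"
  shows "\<bar>(\<integral>y. D y * f y \<partial>M) / (\<integral>y. D y \<partial>M) - a\<bar> \<le> B"
proof -
  have "\<bar>(\<integral>y. D y * f y \<partial>M) - a * (\<integral>y. D y \<partial>M)\<bar> = \<bar>\<integral>y. D y * (f y - a) \<partial>M\<bar>"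
    using assms(1,2) by (simp add: right_diff_distrib mult.commute)
  also have "\<dots> \<le> (\<integral>y. \<bar>D y * (f y - a)\<bar> \<partial>M)"
    by (rule integral_abs_bound)
  also have "\<dots> \<le> (\<integral>y. B * D y \<partial>M)"
    using assms order_trans[OF abs_ge_zero assms(5)] mult_left_mono[OF assms(5) assms(3)]
    by (intro integral_mono') (auto simp: abs_mult mult.commute)
  also have "\<dots> = B * (\<integral>y. D y \<partial>M)"
    by simp
  finally show ?thesis
    using assms(4) by (simp add: divide_simps abs_divide)
qed

lemma integral_reweight:
  fixes D f :: "'a \<Rightarrow> real"
  assumes "D \<in> borel_measurable M" "f \<in> borel_measurable M" "\<And>x. 0 \<le> D x"
  shows "(\<integral>x. f x \<partial>reweight M D) = (\<integral>x. D x * f x \<partial>M) / (\<integral>x. D x \<partial>M)"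
proof -
  have "(\<integral>x. f x \<partial>reweight M D) = (\<integral>x. (D x / (\<integral>y. D y \<partial>M)) *\<^sub>R f x \<partial>M)"
    unfolding reweight_def
    using assms by (intro integral_density) auto
  then show ?thesis
    by simp
qed

text \<open>\<open>W1\<close> is a conditionally complete supremum, so the bound needs the set of test values to be
  bounded above; this is where boundedness of the space enters.\<close>

lemma integral_diff_le_W1:
  fixes M N :: "'a::metric_space measure"
  assumes bounded: "bounded (UNIV :: 'a set)"
    and "prob_space M" "prob_space N" "sets M = sets borel" "sets N = sets borel"
    and "1-lipschitz_on UNIV f"
  shows "(\<integral>x. f x \<partial>M) - (\<integral>x. f x \<partial>N) \<le> W1 M N"
proof -
  define R where "R = diameter (UNIV :: 'a set)"
  have integral_near: "\<bar>(\<integral>x. g x \<partial>P) - g x0\<bar> \<le> R"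
    if "prob_space P" "sets P = sets borel" "1-lipschitz_on UNIV g" for P and g :: "'a \<Rightarrow> real" and x0
  proof -
    interpret P: prob_space P by fact
    have near: "\<bar>g y - g x0\<bar> \<le> R" for y
      using lipschitz_onD[OF that(3), of y x0] diameter_bounded_bound[OF bounded, of y x0]
      unfolding R_def by (simp add: dist_real_def)
    have "\<bar>g y\<bar> \<le> \<bar>g x0\<bar> + R" for y
      using near[of y] by linarith
    then have "integrable P g"
      by (rule integrable_bounded_borel[OF P.finite_measure_axioms that(2)
            lipschitz_borel_measurable[OF that(3)]])
    then show ?thesis
      using weighted_mean_dist_le[of P "\<lambda>_. 1" g "g x0" R] near by (simp add: P.prob_space)
  qed
  have "bdd_above {(\<integral>x. g x \<partial>M) - (\<integral>x. g x \<partial>N) | g :: 'a \<Rightarrow> real. 1-lipschitz_on UNIV g}"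
  proof (rule bdd_aboveI)
    fix y assume "y \<in> {(\<integral>x. g x \<partial>M) - (\<integral>x. g x \<partial>N) | g :: 'a \<Rightarrow> real. 1-lipschitz_on UNIV g}"
    then obtain g :: "'a \<Rightarrow> real" where "1-lipschitz_on UNIV g" "y = (\<integral>x. g x \<partial>M) - (\<integral>x. g x \<partial>N)"
      by blast
    then show "y \<le> 2 * R"
      using integral_near[OF assms(2,4), of g undefined] integral_near[OF assms(3,5), of g undefined]
      by linarith
  qed
  then show ?thesis
    unfolding W1_def using assms(6) by (intro cSup_upper) auto
qed

lemma lipschitz_integral_diff_le_W1:
  fixes M N :: "'a::metric_space measure"
  assumes "bounded (UNIV :: 'a set)"
    and "prob_space M" "prob_space N" "sets M = sets borel" "sets N = sets borel"
    and "C-lipschitz_on UNIV g" "0 < C"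
  shows "(\<integral>x. g x \<partial>M) - (\<integral>x. g x \<partial>N) \<le> C * W1 M N"
proof -
  have "1-lipschitz_on UNIV (\<lambda>x. (1 / C) * g x)"
    using lipschitz_on_cmult_real_nonneg[OF assms(6), of "1 / C"] assms(7) by simp
  from integral_diff_le_W1[OF assms(1-5) this]
  have "((\<integral>x. g x \<partial>M) - (\<integral>x. g x \<partial>N)) / C \<le> W1 M N"
    by (simp add: diff_divide_distrib)
  then show ?thesis
    using assms(7) by (simp add: divide_simps mult.commute)
qed

lemma W1_nonneg:
  fixes M N :: "'a::metric_space measure"
  assumes "bounded (UNIV :: 'a set)"
    and "prob_space M" "prob_space N" "sets M = sets borel" "sets N = sets borel"
  shows "0 \<le> W1 M N"
  using integral_diff_le_W1[OF assms, of "\<lambda>_. 0"] by (simp add: lipschitz_on_def)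

definition sup_convolution :: "('a::metric_space \<Rightarrow> real) \<Rightarrow> real \<Rightarrow> 'a \<Rightarrow> real" where
  "sup_convolution D \<rho> x = (SUP y. D y - dist x y / \<rho>)"

lemma sup_convolution_term_le:
  assumes "\<And>y. D y \<le> b" "0 < \<rho>"
  shows "D y - dist x y / \<rho> \<le> b"
  using assms(1)[of y] divide_nonneg_pos[OF zero_le_dist[of x y] assms(2)] by linarith

lemma bdd_above_sup_convolution:
  assumes "\<And>y. D y \<le> b" "0 < \<rho>"
  shows "bdd_above (range (\<lambda>y. D y - dist x y / \<rho>))"
  using sup_convolution_term_le[OF assms] by (intro bdd_aboveI[where M = b]) auto

lemma sup_convolution_ge:
  assumes "\<And>y. D y \<le> b" "0 < \<rho>"
  shows "D x \<le> sup_convolution D \<rho> x"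
  unfolding sup_convolution_def
  using cSUP_upper[OF UNIV_I bdd_above_sup_convolution[OF assms, where x = x], where x = x] by simp

lemma sup_convolution_le:
  assumes "\<And>y. D y \<le> b" "0 < \<rho>"
  shows "sup_convolution D \<rho> x \<le> b"
  unfolding sup_convolution_def
  using sup_convolution_term_le[OF assms] by (intro cSUP_least) auto

lemma lipschitz_sup_convolution:
  assumes "\<And>y. D y \<le> b" "0 < \<rho>"
  shows "(1 / \<rho>)-lipschitz_on UNIV (sup_convolution D \<rho>)"
proof (rule lipschitz_onI)
  have one_sided: "sup_convolution D \<rho> x \<le> sup_convolution D \<rho> x' + dist x x' / \<rho>" for x x'
    unfolding sup_convolution_def
  proof (intro cSUP_least)
    fix y
    have "D y - dist x y / \<rho> \<le> (D y - dist x' y / \<rho>) + dist x x' / \<rho>"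
      using dist_triangle[of x' y x] assms(2) by (simp add: dist_commute divide_simps)
    also have "\<dots> \<le> (SUP y. D y - dist x' y / \<rho>) + dist x x' / \<rho>"
      using cSUP_upper[OF UNIV_I bdd_above_sup_convolution[OF assms]] by simp
    finally show "D y - dist x y / \<rho> \<le> (SUP y. D y - dist x' y / \<rho>) + dist x x' / \<rho>" .
  qed simp
  fix x y :: 'a
  show "dist (sup_convolution D \<rho> x) (sup_convolution D \<rho> y) \<le> 1 / \<rho> * dist x y"
    using one_sided[of x y] one_sided[of y x] by (simp add: dist_real_def dist_commute abs_le_iff)
qed (use assms(2) in simp)

lemma sup_convolution_eq_outside_A_set:
  assumes "\<And>y. D y \<le> b" "0 < \<rho>" "x \<notin> A_set D \<rho>"
  shows "sup_convolution D \<rho> x = D x"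
proof (rule antisym)
  have "D y - dist x y / \<rho> \<le> D x" for y
  proof -
    have "\<not> D y > D x + dist x y / \<rho>"
      using assms(3) unfolding A_set_def by blast
    then show ?thesis
      by linarith
  qed
  then show "sup_convolution D \<rho> x \<le> D x"
    unfolding sup_convolution_def by (intro cSUP_least) auto
qed (rule sup_convolution_ge[OF assms(1,2)])

text \<open>The case \<open>A = {}\<close> follows the convention \<open>d(x, {}) = \<infinity>\<close> used in \<open>A_bar\<close>;
  Isabelle's \<open>infdist x {}\<close> is \<open>0\<close>.\<close>

definition nbhd_cutoff :: "'a::metric_space set \<Rightarrow> real \<Rightarrow> 'a \<Rightarrow> real" where
  "nbhd_cutoff A \<rho> x = (if A = {} then 0 else max 0 (1 - infdist x A / \<rho>))"

lemma nbhd_cutoff_nonneg: "0 \<le> nbhd_cutoff A \<rho> x"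
  by (simp add: nbhd_cutoff_def)

lemma nbhd_cutoff_eq_1: "x \<in> A \<Longrightarrow> nbhd_cutoff A \<rho> x = 1"
  by (auto simp: nbhd_cutoff_def)

lemma nbhd_cutoff_le_indicator:
  assumes "0 < \<rho>"
  shows "nbhd_cutoff A \<rho> x \<le> indicator {x. A \<noteq> {} \<and> infdist x A \<le> \<rho>} x"
  using assms by (auto simp: nbhd_cutoff_def indicator_def divide_simps infdist_nonneg)

lemma lipschitz_nbhd_cutoff:
  assumes "0 < \<rho>"
  shows "(1 / \<rho>)-lipschitz_on UNIV (nbhd_cutoff A \<rho>)"
proof (rule lipschitz_onI)
  fix x y :: 'a
  have "\<bar>max 0 (1 - infdist x A / \<rho>) - max 0 (1 - infdist y A / \<rho>)\<bar>
      \<le> \<bar>infdist x A - infdist y A\<bar> / \<rho>"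
    using assms by (simp add: max_def abs_if divide_simps)
  also have "\<dots> \<le> dist x y / \<rho>"
    using infdist_triangle_abs[of x A y] assms by (simp add: divide_right_mono)
  finally show "dist (nbhd_cutoff A \<rho> x) (nbhd_cutoff A \<rho> y) \<le> 1 / \<rho> * dist x y"
    using assms by (simp add: nbhd_cutoff_def dist_real_def)
qed (use assms in simp)

lemma closed_A_bar: "closed (A_bar D \<rho>)"
proof (cases "A_set D \<rho> = {}")
  case False
  then have "A_bar D \<rho> = {x. infdist x (A_set D \<rho>) \<le> \<rho>}"
    by (simp add: A_bar_def)
  then show ?thesis
    by (auto intro!: closed_Collect_le continuous_on_infdist continuous_on_id)
qed (simp add: A_bar_def)

lemma sup_convolution_minus_le_nbhd_cutoff:
  assumes "\<And>y. 0 \<le> D y \<and> D y \<le> 1" "0 < \<rho>"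
  shows "sup_convolution D \<rho> x - D x \<le> nbhd_cutoff (A_set D \<rho>) \<rho> x"
proof -
  have D_le_1: "\<And>y. D y \<le> 1"
    using assms(1) by simp
  show ?thesis
  proof (cases "x \<in> A_set D \<rho>")
    case True
    then show ?thesis
      using sup_convolution_le[of D 1, OF D_le_1 assms(2), where x = x] assms(1)[of x] by (simp add: nbhd_cutoff_eq_1)
  next
    case False
    then show ?thesis
      using sup_convolution_eq_outside_A_set[of D 1, OF D_le_1 assms(2) False] by (simp add: nbhd_cutoff_nonneg)
  qed
qed

locale reweighting_setting =
  fixes \<mu> \<pi> :: "'a::metric_space measure" and D\<mu> D\<pi> :: "'a \<Rightarrow> real" and \<epsilon>1 \<epsilon>2 \<rho> :: real
  assumes dist_le_1: "\<And>x y :: 'a. dist x y \<le> 1"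
    and prob_\<mu>: "prob_space \<mu>" and prob_\<pi>: "prob_space \<pi>"
    and sets_\<mu>: "sets \<mu> = sets borel" and sets_\<pi>: "sets \<pi> = sets borel"
    and D\<mu>_borel: "D\<mu> \<in> borel_measurable borel" and D\<pi>_borel: "D\<pi> \<in> borel_measurable borel"
    and D\<mu>_range: "\<And>x. 0 \<le> D\<mu> x \<and> D\<mu> x \<le> 1" and D\<pi>_range: "\<And>x. 0 \<le> D\<pi> x \<and> D\<pi> x \<le> 1"
    and W1_le: "W1 \<mu> \<pi> \<le> \<epsilon>1"
    and D\<pi>_D\<mu>_close: "\<And>x. \<bar>D\<pi> x - D\<mu> x\<bar> \<le> \<epsilon>2"
    and \<rho>_pos: "0 < \<rho>" and \<rho>_le_1: "\<rho> \<le> 1"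
begin

sublocale \<mu>: prob_space \<mu>
  by (rule prob_\<mu>)

sublocale \<pi>: prob_space \<pi>
  by (rule prob_\<pi>)

abbreviation envelope :: "'a \<Rightarrow> real" where
  "envelope \<equiv> sup_convolution D\<pi> \<rho>"

abbreviation bump :: "'a \<Rightarrow> real" where
  "bump \<equiv> nbhd_cutoff (A_set D\<pi> \<rho>) \<rho>"

lemma integrable_\<mu>:
  fixes f :: "'a \<Rightarrow> real"
  shows "f \<in> borel_measurable borel \<Longrightarrow> (\<And>x. \<bar>f x\<bar> \<le> B) \<Longrightarrow> integrable \<mu> f"
  by (rule integrable_bounded_borel[OF \<mu>.finite_measure_axioms sets_\<mu>])

lemma integrable_\<pi>:
  fixes f :: "'a \<Rightarrow> real"
  shows "f \<in> borel_measurable borel \<Longrightarrow> (\<And>x. \<bar>f x\<bar> \<le> B) \<Longrightarrow> integrable \<pi> f"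
  by (rule integrable_bounded_borel[OF \<pi>.finite_measure_axioms sets_\<pi>])

lemma bounded_UNIV: "bounded (UNIV :: 'a set)"
  unfolding bounded_def by (metis dist_le_1)

lemma \<epsilon>1_nonneg: "0 \<le> \<epsilon>1"
  using W1_nonneg[OF bounded_UNIV prob_\<mu> prob_\<pi> sets_\<mu> sets_\<pi>] W1_le by linarith

lemma \<epsilon>2_nonneg: "0 \<le> \<epsilon>2"
  using D\<pi>_D\<mu>_close[of undefined] by linarith

lemma lipschitz_integral_diff_le:
  assumes "C-lipschitz_on UNIV g" "0 < C"
  shows "(\<integral>x. g x \<partial>\<mu>) - (\<integral>x. g x \<partial>\<pi>) \<le> C * \<epsilon>1"
proof -
  from lipschitz_integral_diff_le_W1[OF bounded_UNIV prob_\<mu> prob_\<pi> sets_\<mu> sets_\<pi> assms]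
  show ?thesis
    using W1_le assms(2) by (meson mult_left_mono less_imp_le order_trans)
qed

lemma D\<pi>_le_1: "D\<pi> x \<le> 1"
  using D\<pi>_range by simp

lemma D\<pi>_le_envelope: "D\<pi> x \<le> envelope x"
  by (rule sup_convolution_ge[of D\<pi> 1, OF D\<pi>_le_1 \<rho>_pos])

lemma abs_envelope_le_1: "\<bar>envelope x\<bar> \<le> 1"
  using sup_convolution_le[of D\<pi> 1, OF D\<pi>_le_1 \<rho>_pos, where x = x] D\<pi>_le_envelope[of x] D\<pi>_range[of x]
  by linarith

lemma lipschitz_envelope: "(1 / \<rho>)-lipschitz_on UNIV envelope"
  by (rule lipschitz_sup_convolution[of D\<pi> 1, OF D\<pi>_le_1 \<rho>_pos])

lemma envelope_minus_le_bump: "envelope x - D\<pi> x \<le> bump x"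
  by (rule sup_convolution_minus_le_nbhd_cutoff[OF D\<pi>_range \<rho>_pos])

lemma bump_le_indicator: "bump x \<le> indicator (A_bar D\<pi> \<rho>) x"
  using nbhd_cutoff_le_indicator[OF \<rho>_pos] by (simp add: A_bar_def)

lemma abs_bump_le_1: "\<bar>bump x\<bar> \<le> 1"
proof -
  have "indicator (A_bar D\<pi> \<rho>) x \<le> (1 :: real)"
    by (simp add: indicator_def)
  then show ?thesis
    using bump_le_indicator[of x] nbhd_cutoff_nonneg[of "A_set D\<pi> \<rho>" \<rho> x]
    unfolding abs_le_iff by linarith
qed

lemma lipschitz_bump: "(1 / \<rho>)-lipschitz_on UNIV bump"
  by (rule lipschitz_nbhd_cutoff[OF \<rho>_pos])

lemma integrable_envelope: "integrable \<mu> envelope" "integrable \<pi> envelope"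
  using lipschitz_borel_measurable[OF lipschitz_envelope] abs_envelope_le_1
  by (auto intro: integrable_\<mu> integrable_\<pi>)

lemma integrable_bump: "integrable \<mu> bump" "integrable \<pi> bump"
  using lipschitz_borel_measurable[OF lipschitz_bump] abs_bump_le_1
  by (auto intro: integrable_\<mu> integrable_\<pi>)

lemma integrable_D: "integrable \<mu> D\<mu>" "integrable \<mu> D\<pi>" "integrable \<pi> D\<pi>"
  using D\<mu>_borel D\<pi>_borel D\<mu>_range D\<pi>_range
  by (auto intro!: integrable_\<mu>[where B = 1] integrable_\<pi>[where B = 1])

lemma D\<pi>_le_D\<mu>_plus: "D\<pi> x \<le> D\<mu> x + \<epsilon>2"
  using D\<pi>_D\<mu>_close[of x] by (simp add: abs_le_iff)

lemma integral_bump_\<pi>_le: "(\<integral>x. bump x \<partial>\<pi>) \<le> measure \<pi> (A_bar D\<pi> \<rho>)"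
proof -
  have "A_bar D\<pi> \<rho> \<in> sets \<pi>"
    using borel_closed[OF closed_A_bar] sets_\<pi> by simp
  then have "integrable \<pi> (indicator (A_bar D\<pi> \<rho>) :: 'a \<Rightarrow> real)"
    by (rule integrable_real_indicator) (simp_all add: \<pi>.emeasure_finite less_top[symmetric])
  then have "(\<integral>x. bump x \<partial>\<pi>) \<le> (\<integral>x. indicator (A_bar D\<pi> \<rho>) x \<partial>\<pi>)"
    using integrable_bump(2) bump_le_indicator by (intro integral_mono) auto
  also have "\<dots> = measure \<pi> (A_bar D\<pi> \<rho>)"
    by (simp add: sets_eq_imp_space_eq[OF sets_\<pi>])
  finally show ?thesis .
qed

lemma integral_bump_\<mu>_le: "(\<integral>x. bump x \<partial>\<mu>) \<le> measure \<pi> (A_bar D\<pi> \<rho>) + \<epsilon>1 / \<rho>"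
  using lipschitz_integral_diff_le[OF lipschitz_bump] integral_bump_\<pi>_le \<rho>_pos by simp

lemma integral_envelope_diff_le: "(\<integral>x. envelope x \<partial>\<pi>) - (\<integral>x. envelope x \<partial>\<mu>) \<le> \<epsilon>1 / \<rho>"
proof -
  have "(1 / \<rho>)-lipschitz_on UNIV (\<lambda>x. - envelope x)"
    using lipschitz_envelope by simp
  from lipschitz_integral_diff_le[OF this] show ?thesis
    using \<rho>_pos by simp
qed

lemma integral_D\<mu>_lower_bound:
  "(\<integral>x. D\<pi> x \<partial>\<pi>) - (2 * \<epsilon>1 / \<rho> + \<epsilon>2 + measure \<pi> (A_bar D\<pi> \<rho>)) \<le> (\<integral>x. D\<mu> x \<partial>\<mu>)"
proof -
  have "(\<integral>x. D\<pi> x \<partial>\<pi>) \<le> (\<integral>x. envelope x \<partial>\<pi>)"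
    using integrable_D(3) integrable_envelope(2) D\<pi>_le_envelope by (intro integral_mono) auto
  also have "\<dots> \<le> (\<integral>x. envelope x \<partial>\<mu>) + \<epsilon>1 / \<rho>"
    using integral_envelope_diff_le by simp
  also have "(\<integral>x. envelope x \<partial>\<mu>) \<le> (\<integral>x. D\<pi> x + bump x \<partial>\<mu>)"
    using integrable_envelope(1) integrable_D(2) integrable_bump(1) envelope_minus_le_bump
    by (intro integral_mono) (auto simp: algebra_simps)
  also have "\<dots> = (\<integral>x. D\<pi> x \<partial>\<mu>) + (\<integral>x. bump x \<partial>\<mu>)"
    using integrable_D(2) integrable_bump(1) by simp
  also have "(\<integral>x. D\<pi> x \<partial>\<mu>) \<le> (\<integral>x. D\<mu> x + \<epsilon>2 \<partial>\<mu>)"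
    using integrable_D(1,2) D\<pi>_le_D\<mu>_plus by (intro integral_mono) auto
  also have "\<dots> = (\<integral>x. D\<mu> x \<partial>\<mu>) + \<epsilon>2"
    using integrable_D(1) by (simp add: \<mu>.prob_space)
  finally show ?thesis
    using integral_bump_\<mu>_le by linarith
qed

lemma centered_integral_D\<pi>_bound:
  fixes g :: "'a \<Rightarrow> real"
  assumes g_lip: "1-lipschitz_on UNIV g" and g_bound: "\<And>x. \<bar>g x\<bar> \<le> 1"
    and centered: "(\<integral>x. D\<mu> x * g x \<partial>\<mu>) = 0"
  shows "- (\<integral>x. D\<pi> x * g x \<partial>\<pi>) \<le> 3 * \<epsilon>1 / \<rho> + \<epsilon>2 + 2 * measure \<pi> (A_bar D\<pi> \<rho>)"
proof -
  have g_borel: "g \<in> borel_measurable borel"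
    by (rule lipschitz_borel_measurable[OF g_lip])
  have bounded_times_g: "\<bar>u x * g x\<bar> \<le> 1" if "\<And>x. \<bar>u x\<bar> \<le> 1" for u :: "'a \<Rightarrow> real" and x
    using abs_mult_le_of_abs_le_1[OF g_bound[of x], of "u x"] that[of x] by linarith
  have D\<mu>_abs: "\<bar>D\<mu> x\<bar> \<le> 1" and D\<pi>_abs: "\<bar>D\<pi> x\<bar> \<le> 1" for x
    using D\<mu>_range[of x] D\<pi>_range[of x] by auto
  have int_D\<mu>g: "integrable \<mu> (\<lambda>x. D\<mu> x * g x)"
    using g_borel D\<mu>_borel bounded_times_g[OF D\<mu>_abs] by (intro integrable_\<mu>[where B = 1]) auto
  have int_D\<pi>g: "integrable \<pi> (\<lambda>x. D\<pi> x * g x)"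
    using g_borel D\<pi>_borel bounded_times_g[OF D\<pi>_abs] by (intro integrable_\<pi>[where B = 1]) auto
  have env_borel: "envelope \<in> borel_measurable borel"
    by (rule lipschitz_borel_measurable[OF lipschitz_envelope])
  have int_env_g: "integrable \<mu> (\<lambda>x. envelope x * g x)" "integrable \<pi> (\<lambda>x. envelope x * g x)"
    using g_borel env_borel bounded_times_g[OF abs_envelope_le_1]
    by (auto intro!: integrable_\<mu>[where B = 1] integrable_\<pi>[where B = 1])
  have close_times_g: "\<bar>(D\<mu> x - D\<pi> x) * g x\<bar> \<le> \<epsilon>2" for x
    using abs_mult_le_of_abs_le_1[OF g_bound[of x], of "D\<mu> x - D\<pi> x"] D\<pi>_D\<mu>_close[of x] by simp
  have gap_times_g: "\<bar>(envelope x - D\<pi> x) * g x\<bar> \<le> bump x" for x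
    using abs_mult_le_of_abs_le_1[OF g_bound[of x], of "envelope x - D\<pi> x"]
      D\<pi>_le_envelope[of x] envelope_minus_le_bump[of x] by simp
  have "0 \<le> (\<integral>x. \<epsilon>2 + envelope x * g x + bump x \<partial>\<mu>)"
    unfolding centered[symmetric]
  proof (rule integral_mono)
    show "D\<mu> x * g x \<le> \<epsilon>2 + envelope x * g x + bump x" for x
      using close_times_g[of x] gap_times_g[of x] by (simp add: algebra_simps abs_le_iff)
  qed (use int_D\<mu>g int_env_g integrable_bump in auto)
  then have upper: "0 \<le> \<epsilon>2 + (\<integral>x. envelope x * g x \<partial>\<mu>) + (\<integral>x. bump x \<partial>\<mu>)"
    using int_env_g(1) integrable_bump(1) by (simp add: \<mu>.prob_space)
  have "(\<integral>x. envelope x * g x - bump x \<partial>\<pi>) \<le> (\<integral>x. D\<pi> x * g x \<partial>\<pi>)"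
  proof (rule integral_mono)
    show "envelope x * g x - bump x \<le> D\<pi> x * g x" for x
      using gap_times_g[of x] by (simp add: algebra_simps abs_le_iff)
  qed (use int_D\<pi>g int_env_g integrable_bump in auto)
  then have lower: "(\<integral>x. envelope x * g x \<partial>\<pi>) - (\<integral>x. bump x \<partial>\<pi>) \<le> (\<integral>x. D\<pi> x * g x \<partial>\<pi>)"
    using int_env_g(2) integrable_bump(2) by simp
  have "(1 * 1 + 1 * (1 / \<rho>))-lipschitz_on UNIV (\<lambda>x. envelope x * g x)"
    by (rule lipschitz_on_mult_bounded[OF lipschitz_envelope g_lip abs_envelope_le_1 g_bound])
  from lipschitz_integral_diff_le[OF this]
  have "(\<integral>x. envelope x * g x \<partial>\<mu>) - (\<integral>x. envelope x * g x \<partial>\<pi>) \<le> (1 + 1 / \<rho>) * \<epsilon>1"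
    using \<rho>_pos by (simp add: add_pos_pos)
  also have "\<dots> \<le> (2 / \<rho>) * \<epsilon>1"
    using \<rho>_pos \<rho>_le_1 \<epsilon>1_nonneg by (intro mult_right_mono) (simp_all add: field_simps)
  finally show ?thesis
    using upper lower integral_bump_\<mu>_le integral_bump_\<pi>_le by simp
qed

lemma reweight_integral_diff_le:
  fixes f :: "'a \<Rightarrow> real"
  assumes Z\<mu>_pos: "0 < (\<integral>x. D\<mu> x \<partial>\<mu>)" and Z\<pi>_pos: "0 < (\<integral>x. D\<pi> x \<partial>\<pi>)"
    and f_lip: "1-lipschitz_on UNIV f"
  shows "(\<integral>x. f x \<partial>reweight \<mu> D\<mu>) - (\<integral>x. f x \<partial>reweight \<pi> D\<pi>)
    \<le> (3 * \<epsilon>1 / \<rho> + \<epsilon>2 + 2 * measure \<pi> (A_bar D\<pi> \<rho>)) / (\<integral>x. D\<pi> x \<partial>\<pi>)"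
proof -
  define Z\<mu> where "Z\<mu> = (\<integral>x. D\<mu> x \<partial>\<mu>)"
  define Z\<pi> where "Z\<pi> = (\<integral>x. D\<pi> x \<partial>\<pi>)"
  define c where "c = (\<integral>x. D\<mu> x * f x \<partial>\<mu>) / Z\<mu>"
  define g where "g x = f x - c" for x
  have f_borel: "f \<in> borel_measurable borel"
    by (rule lipschitz_borel_measurable[OF f_lip])
  have f_osc: "\<bar>f y - f x\<bar> \<le> 1" for x y
    using lipschitz_onD[OF f_lip, of y x] dist_le_1[of y x] by (simp add: dist_real_def)
  have f_bound: "\<bar>D x * f x\<bar> \<le> \<bar>f undefined\<bar> + 1" if "\<And>x. 0 \<le> D x \<and> D x \<le> 1" for D :: "'a \<Rightarrow> real" and x
  proof -
    have "\<bar>D x * f x\<bar> \<le> \<bar>f x\<bar>"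
      using that[of x] by (simp add: abs_mult mult_left_le_one_le)
    then show ?thesis
      using f_osc[of undefined x] by linarith
  qed
  have int_D\<mu>f: "integrable \<mu> (\<lambda>x. D\<mu> x * f x)"
    using f_borel D\<mu>_borel f_bound[OF D\<mu>_range] by (intro integrable_\<mu>) auto
  have int_D\<pi>f: "integrable \<pi> (\<lambda>x. D\<pi> x * f x)"
    using f_borel D\<pi>_borel f_bound[OF D\<pi>_range] by (intro integrable_\<pi>) auto
  have g_lip: "1-lipschitz_on UNIV g"
    using f_lip by (simp add: g_def lipschitz_on_def dist_real_def)
  have g_bound: "\<bar>g x\<bar> \<le> 1" for x
    using weighted_mean_dist_le[OF integrable_D(1) int_D\<mu>f _ Z\<mu>_pos f_osc, of x] D\<mu>_range
    by (simp add: g_def c_def Z\<mu>_def abs_minus_commute)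
  have "(\<integral>x. D\<mu> x * g x \<partial>\<mu>) = (\<integral>x. D\<mu> x * f x \<partial>\<mu>) - c * Z\<mu>"
    using int_D\<mu>f integrable_D(1) by (simp add: g_def Z\<mu>_def right_diff_distrib mult.commute)
  then have centered: "(\<integral>x. D\<mu> x * g x \<partial>\<mu>) = 0"
    using Z\<mu>_pos by (simp add: c_def Z\<mu>_def)
  have "(\<integral>x. D\<pi> x * f x \<partial>\<pi>) = (\<integral>x. D\<pi> x * g x + c * D\<pi> x \<partial>\<pi>)"
    by (simp add: g_def algebra_simps)
  also have "\<dots> = (\<integral>x. D\<pi> x * g x \<partial>\<pi>) + c * Z\<pi>"
    using int_D\<pi>f integrable_D(3) by (simp add: g_def Z\<pi>_def right_diff_distrib)
  finally have D\<pi>f_eq: "(\<integral>x. D\<pi> x * f x \<partial>\<pi>) = (\<integral>x. D\<pi> x * g x \<partial>\<pi>) + c * Z\<pi>" .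
  have reweight_\<mu>: "(\<integral>x. f x \<partial>reweight \<mu> D\<mu>) = c"
    using integral_reweight[of D\<mu> \<mu> f] D\<mu>_borel f_borel D\<mu>_range
    by (simp add: measurable_cong_sets[OF sets_\<mu> refl] c_def Z\<mu>_def)
  have reweight_\<pi>: "(\<integral>x. f x \<partial>reweight \<pi> D\<pi>) = (\<integral>x. D\<pi> x * g x \<partial>\<pi>) / Z\<pi> + c"
    using integral_reweight[of D\<pi> \<pi> f] D\<pi>_borel f_borel D\<pi>_range Z\<pi>_pos D\<pi>f_eq
    by (simp add: measurable_cong_sets[OF sets_\<pi> refl] Z\<pi>_def add_divide_distrib)
  have "- (\<integral>x. D\<pi> x * g x \<partial>\<pi>) / Z\<pi> \<le> (3 * \<epsilon>1 / \<rho> + \<epsilon>2 + 2 * measure \<pi> (A_bar D\<pi> \<rho>)) / Z\<pi>"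
    using centered_integral_D\<pi>_bound[OF g_lip g_bound centered] Z\<pi>_pos
    by (intro divide_right_mono) (simp_all add: Z\<pi>_def)
  then show ?thesis
    using reweight_\<mu> reweight_\<pi> by (simp add: Z\<pi>_def)
qed

lemma W1_reweight_le:
  assumes "0 < (\<integral>x. D\<mu> x \<partial>\<mu>)" "0 < (\<integral>x. D\<pi> x \<partial>\<pi>)"
  shows "W1 (reweight \<mu> D\<mu>) (reweight \<pi> D\<pi>)
    \<le> (3 * \<epsilon>1 / \<rho> + \<epsilon>2 + 2 * measure \<pi> (A_bar D\<pi> \<rho>)) / (\<integral>x. D\<pi> x \<partial>\<pi>)"
  unfolding W1_def
proof (rule cSup_least)
  show "{(\<integral>x. f x \<partial>reweight \<mu> D\<mu>) - (\<integral>x. f x \<partial>reweight \<pi> D\<pi>) | f. 1-lipschitz_on UNIV f} \<noteq> {}"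
    by (auto intro!: exI[of _ "\<lambda>_. 0"] simp: lipschitz_on_def)
qed (use reweight_integral_diff_le[OF assms] in blast)

end

theorem lemma5p3:
  fixes \<mu> \<pi> :: "'a::polish_space measure"
    and D\<mu> D\<pi> :: "'a \<Rightarrow> real"
    and \<delta> \<epsilon>1 \<epsilon>2 \<rho> :: real
  assumes diam: "bounded (UNIV :: 'a set)" "diameter (UNIV :: 'a set) = 1"
    and prob: "prob_space \<mu>" "prob_space \<pi>"
    and sets: "sets \<mu> = sets borel" "sets \<pi> = sets borel"
    and meas: "D\<mu> \<in> borel_measurable borel" "D\<pi> \<in> borel_measurable borel"
    and range: "\<And>x. 0 \<le> D\<mu> x \<and> D\<mu> x \<le> 1" "\<And>x. 0 \<le> D\<pi> x \<and> D\<pi> x \<le> 1"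
    and delta: "\<delta> > 0" "(\<integral>x. D\<pi> x \<partial>\<pi>) \<ge> \<delta>"
    and eps1: "W1 \<mu> \<pi> \<le> \<epsilon>1"
    and eps2: "\<And>x. \<bar>D\<pi> x - D\<mu> x\<bar> \<le> \<epsilon>2"
    and rho: "0 < \<rho>" "\<rho> \<le> 1"
  shows "((\<integral>x. D\<mu> x \<partial>\<mu>) > 0 \<longrightarrow>
           W1 (reweight \<mu> D\<mu>) (reweight \<pi> D\<pi>)
             \<le> (1 / \<delta>) * (3 * \<epsilon>1 / \<rho> + \<epsilon>2 + 2 * measure \<pi> (A_bar D\<pi> \<rho>)))
       \<and> ((1 / \<delta>) * (3 * \<epsilon>1 / \<rho> + \<epsilon>2 + 2 * measure \<pi> (A_bar D\<pi> \<rho>)) < 1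
           \<longrightarrow> (\<integral>x. D\<mu> x \<partial>\<mu>) > 0)"
proof -
  have dist_le_1: "dist x y \<le> 1" for x y :: 'a
    using diameter_bounded_bound[OF diam(1), of x y] diam(2) by simp
  interpret reweighting_setting \<mu> \<pi> D\<mu> D\<pi> \<epsilon>1 \<epsilon>2 \<rho>
    by (rule reweighting_setting.intro[OF dist_le_1 prob sets meas range eps1 eps2 rho])
  define E where "E = 3 * \<epsilon>1 / \<rho> + \<epsilon>2 + 2 * measure \<pi> (A_bar D\<pi> \<rho>)"
  have E_nonneg: "0 \<le> E"
    using \<epsilon>1_nonneg \<epsilon>2_nonneg rho by (simp add: E_def)
  show ?thesis
    unfolding E_def[symmetric]
  proof (intro conjI impI)
    assume "0 < (\<integral>x. D\<mu> x \<partial>\<mu>)"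
    then have "W1 (reweight \<mu> D\<mu>) (reweight \<pi> D\<pi>) \<le> E / (\<integral>x. D\<pi> x \<partial>\<pi>)"
      using W1_reweight_le delta by (simp add: E_def)
    also have "\<dots> \<le> E / \<delta>"
      using E_nonneg delta by (intro divide_left_mono) auto
    finally show "W1 (reweight \<mu> D\<mu>) (reweight \<pi> D\<pi>) \<le> 1 / \<delta> * E"
      by simp
  next
    assume "1 / \<delta> * E < 1"
    then have "E < \<delta>"
      using delta(1) by (simp add: field_simps)
    then show "0 < (\<integral>x. D\<mu> x \<partial>\<mu>)"
      using integral_D\<mu>_lower_bound delta(2) \<epsilon>1_nonneg rho(1) measure_nonneg[of \<pi> "A_bar D\<pi> \<rho>"]
        divide_nonneg_pos[OF \<epsilon>1_nonneg rho(1)]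
      unfolding E_def by linarith
  qed
qed

end
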